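(* Let $L:\mathbb{R}\to[1,\infty)$ be given by $L(x):=1/\mathbf{P}(\sigma_0>x)$ for a strictly positive random variable $\sigma_0$, and suppose $L$ is slowly varying at infinity, i.e. $\lim_{u\to\infty}L(uv)/L(u)=1$ for every $v>0$. Let $\varepsilon>\varepsilon'>0$ and let $x_t,y_t$ be non-decreasing functions of $t$ with $x_t,y_t\to\infty$. Then there exists $t'>0$ such that \[ \{t>t': L(x_t)>(1+\varepsilon)L(y_t)\}\subseteq\{t>t': L(x_t-y_t)>(1+\varepsilon')L(y_t)\}.\] *)

theory Defs
  imports "HOL-Probability.Probability"
begin

definition tailL :: "'a measure \<Rightarrow> ('a \<Rightarrow> real) \<Rightarrow> real \<Rightarrow> real" where
  "tailL M \<sigma> x = 1 / measure M {\<omega> \<in> space M. \<sigma> \<omega> > x}"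

definition slowly_varying :: "(real \<Rightarrow> real) \<Rightarrow> bool" where
  "slowly_varying L \<longleftrightarrow> (\<forall>v>0. ((\<lambda>u. L (u * v) / L u) \<longlongrightarrow> 1) at_top)"

end

theory Submission
  imports Defs
begin

text \<open>\<open>L\<close> is non-decreasing as the reciprocal of a tail probability, and \<open>L(2y) \<sim> L(y)\<close>;
  so for large \<open>t\<close> the inequality \<open>L(x) > (1+\<epsilon>) L(y)\<close> forces \<open>x > 2y\<close>. Then \<open>x - y \<ge> x/2\<close>, and
  \<open>L(x/2) \<sim> L(x)\<close> gives \<open>L(x - y) \<ge> L(x/2) > (1+\<epsilon>')/(1+\<epsilon>) L(x) > (1+\<epsilon>') L(y)\<close>.\<close>

lemma mono_tailL:
  assumes "finite_measure M" and "\<sigma> \<in> borel_measurable M" and "\<And>z. tailL M \<sigma> z > 0"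
  shows "mono (tailL M \<sigma>)"
proof (rule monoI)
  fix a b :: real assume "a \<le> b"
  then have "measure M {\<omega> \<in> space M. \<sigma> \<omega> > b} \<le> measure M {\<omega> \<in> space M. \<sigma> \<omega> > a}"
    using assms(2) by (intro finite_measure.finite_measure_mono[OF assms(1)]) auto
  moreover have "measure M {\<omega> \<in> space M. \<sigma> \<omega> > b} > 0"
    using assms(3)[of b] by (simp add: tailL_def)
  ultimately show "tailL M \<sigma> a \<le> tailL M \<sigma> b"
    unfolding tailL_def by (intro divide_left_mono) auto
qed

lemma slowly_varying_tendsto_compose:
  assumes "slowly_varying L" and "filterlim f at_top F" and "v > 0"
  shows "((\<lambda>t. L (f t * v) / L (f t)) \<longlongrightarrow> 1) F"
  using filterlim_compose[OF _ assms(2)] assms(1,3) by (auto simp: slowly_varying_def)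

lemma mono_ratio_bounds_imp_difference_bound:
  fixes L :: "real \<Rightarrow> real" and a b \<epsilon> \<epsilon>' :: real
  assumes "mono L" and "\<epsilon> > 0" and "\<epsilon>' \<ge> 0"
    and "L (b * 2) < (1 + \<epsilon>) * L b" and "(1 + \<epsilon>) * L (a * (1/2)) > (1 + \<epsilon>') * L a"
    and "L a > (1 + \<epsilon>) * L b"
  shows "L (a - b) > (1 + \<epsilon>') * L b"
proof -
  have "a > 2 * b"
  proof (rule ccontr)
    assume "\<not> a > 2 * b"
    then have "L a \<le> L (b * 2)" by (intro monoD[OF \<open>mono L\<close>]) simp
    then show False using assms(4,6) by simp
  qed
  then have "L (a * (1/2)) \<le> L (a - b)" by (intro monoD[OF \<open>mono L\<close>]) simp
  moreover have "(1 + \<epsilon>) * L (a * (1/2)) > (1 + \<epsilon>) * ((1 + \<epsilon>') * L b)"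
  proof -
    have "(1 + \<epsilon>') * L a \<ge> (1 + \<epsilon>') * ((1 + \<epsilon>) * L b)"
      using assms(3,6) by (intro mult_left_mono) simp_all
    then show ?thesis using assms(5) by (simp add: algebra_simps)
  qed
  then have "L (a * (1/2)) > (1 + \<epsilon>') * L b"
    using assms(2) by (simp add: mult_less_cancel_left_pos)
  ultimately show ?thesis by linarith
qed

lemma slowly_varying_eventually_difference_bound:
  fixes L :: "real \<Rightarrow> real"
  assumes "mono L" and "\<And>z. L z > 0" and "slowly_varying L"
    and "\<epsilon> > \<epsilon>'" and "\<epsilon>' > 0"
    and "filterlim x at_top F" and "filterlim y at_top F"
  shows "eventually (\<lambda>t. L (x t) > (1 + \<epsilon>) * L (y t) \<longrightarrow>
                          L (x t - y t) > (1 + \<epsilon>') * L (y t)) F"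
proof -
  define c where "c = (1 + \<epsilon>') / (1 + \<epsilon>)"
  have "c < 1" using assms(4,5) by (simp add: c_def)
  have "eventually (\<lambda>t. L (y t * 2) / L (y t) < 1 + \<epsilon>) F"
    using slowly_varying_tendsto_compose[OF assms(3,7), of 2] assms(4,5)
    by (intro order_tendstoD) auto
  moreover have "eventually (\<lambda>t. L (x t * (1/2)) / L (x t) > c) F"
    using slowly_varying_tendsto_compose[OF assms(3,6), of "1/2"] \<open>c < 1\<close>
    by (intro order_tendstoD) auto
  ultimately show ?thesis
  proof eventually_elim
    case (elim t)
    then have "L (y t * 2) < (1 + \<epsilon>) * L (y t)"
      and "(1 + \<epsilon>) * L (x t * (1/2)) > (1 + \<epsilon>') * L (x t)"
      using assms(2)[of "y t"] assms(2)[of "x t"] assms(4,5) by (auto simp: c_def field_simps)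
    then show ?case
      using assms(4,5) by (intro impI mono_ratio_bounds_imp_difference_bound[OF assms(1)]) auto
  qed
qed

theorem lemma3p3:
  fixes M :: "'a measure" and \<sigma>0 :: "'a \<Rightarrow> real"
    and x y :: "real \<Rightarrow> real" and \<epsilon> \<epsilon>' :: real
  assumes "prob_space M"
    and "\<sigma>0 \<in> borel_measurable M"
    and "\<forall>\<omega>\<in>space M. \<sigma>0 \<omega> > 0"
    and "\<forall>z. tailL M \<sigma>0 z \<in> {1..}"
    and "slowly_varying (tailL M \<sigma>0)"
    and "\<epsilon> > \<epsilon>'" and "\<epsilon>' > 0"
    and "mono x" and "mono y"
    and "filterlim x at_top at_top" and "filterlim y at_top at_top"
  shows "\<exists>t'>0. {t. t > t' \<and> tailL M \<sigma>0 (x t) > (1 + \<epsilon>) * tailL M \<sigma>0 (y t)}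
              \<subseteq> {t. t > t' \<and> tailL M \<sigma>0 (x t - y t) > (1 + \<epsilon>') * tailL M \<sigma>0 (y t)}"
proof -
  have L_pos: "tailL M \<sigma>0 z > 0" for z
  proof -
    have "tailL M \<sigma>0 z \<ge> 1" using assms(4) by simp
    then show ?thesis by linarith
  qed
  have "finite_measure M" using assms(1) by (simp add: prob_space_def)
  then have "mono (tailL M \<sigma>0)"
    using mono_tailL assms(2) L_pos by blast
  then obtain t0 where t0: "\<And>t. t \<ge> t0 \<Longrightarrow>
      tailL M \<sigma>0 (x t) > (1 + \<epsilon>) * tailL M \<sigma>0 (y t) \<longrightarrow>
      tailL M \<sigma>0 (x t - y t) > (1 + \<epsilon>') * tailL M \<sigma>0 (y t)"
    using slowly_varying_eventually_difference_bound[OF _ L_pos assms(5,6,7,10,11)]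
    unfolding eventually_at_top_linorder by blast
  show ?thesis
    by (intro exI[of _ "max t0 1"] conjI subsetI) (auto dest: t0[rule_format, OF less_imp_le])
qed

end
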